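(* (1) For every subset $R\subseteq B$: if $R$ is top terminating relative to $T$, then $R$ is terminating relative to $T$. (2) For every subset $Q\subseteq D_T$: if $\overline{Q}$ is top terminating relative to $\overline{T}$, then $\overline{Q}$ is terminating relative to $\overline{T}$.
   Context: For an SRS $R$ over $\Sigma$, $\to_R=\{(u\ell v,urv): u,v\in\Sigma^*, \ell\to r\in R\}$ and the top rewrite relation is $\to_{R_{\mathrm{top}}}=\{(\ell v,rv): v\in\Sigma^*,\ell\to r\in R\}$. For relations $\to_1,\to_2$, "$\to_1$ is terminating relative to $\to_2$" means there is no infinite sequence $s_0,s_1,\dots$ with $s_i\to_1 s_{i+1}$ for infinitely many $i$ and $s_i\to_2 s_{i+1}$ for all other $i$. "$R$ terminating relative to $S$" refers to $\to_R$ vs $\to_S$; "$R$ top terminating relative to $S$" refers to $\to_{R_{\mathrm{top}}}$ vs $\to_S$. The reversal of a string $s_1\cdots s_n$ is $s_n\cdots s_1$ and $\overline{R}=\{\overline{\ell}\to\overline{r}:\ell\to r\in R\}$. Alphabet $\{0_2,1_2,0_3,1_3,2_3,\lhd,\rhd\}$; $D_T=\{0_2\rhd\to\rhd,\ 1_2\rhd\to 2_3\rhd\}$; $A=\{0_20_3\to0_30_2,\ 0_21_3\to0_31_2,\ 0_22_3\to1_30_2,\ 1_20_3\to1_31_2,\ 1_21_3\to2_30_2,\ 1_22_3\to2_31_2\}$; $B=\{\lhd0_3\to\lhd1_2,\ \lhd1_3\to\lhd0_20_2,\ \lhd2_3\to\lhd0_21_2\}$; $T=D_T\cup A\cup B$.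 *)

theory Defs
  imports Main
begin

datatype sym = Zero2 | One2 | Zero3 | One3 | Two3 | Lhd | Rhd

type_synonym srs = "(sym list \<times> sym list) set"

definition rstep :: "srs \<Rightarrow> (sym list \<times> sym list) set" where
  "rstep R = {(u @ l @ v, u @ r @ v) | u l r v. (l, r) \<in> R}"

definition topstep :: "srs \<Rightarrow> (sym list \<times> sym list) set" where
  "topstep R = {(l @ v, r @ v) | l r v. (l, r) \<in> R}"

definition rel_terminating :: "('a \<times> 'a) set \<Rightarrow> ('a \<times> 'a) set \<Rightarrow> bool" where
  "rel_terminating R1 R2 \<longleftrightarrow>
     \<not> (\<exists>(s :: nat \<Rightarrow> 'a) (I :: nat set). infinite I
          \<and> (\<forall>i\<in>I. (s i, s (Suc i)) \<in> R1)
          \<and> (\<forall>i. i \<notin> I \<longrightarrow> (s i, s (Suc i)) \<in> R2))"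

definition rev_srs :: "srs \<Rightarrow> srs" where
  "rev_srs R = {(rev l, rev r) | l r. (l, r) \<in> R}"

definition D_T :: srs where
  "D_T = {([Zero2, Rhd], [Rhd]), ([One2, Rhd], [Two3, Rhd])}"

definition A_rules :: srs where
  "A_rules = {([Zero2, Zero3], [Zero3, Zero2]),
              ([Zero2, One3], [Zero3, One2]),
              ([Zero2, Two3], [One3, Zero2]),
              ([One2, Zero3], [One3, One2]),
              ([One2, One3], [Two3, Zero2]),
              ([One2, Two3], [Two3, One2])}"

definition B_rules :: srs where
  "B_rules = {([Lhd, Zero3], [Lhd, One2]),
              ([Lhd, One3], [Lhd, Zero2, Zero2]),
              ([Lhd, Two3], [Lhd, Zero2, One2])}"

definition T_rules :: srs where
  "T_rules = D_T \<union> A_rules \<union> B_rules"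

end

theory Submission
  imports Defs "HOL-Library.Infinite_Set"
begin

text \<open>Fix a marker symbol \<open>c\<close>
  (\<open>\<lhd>\<close> for part (1), \<open>\<rhd>\<close> after reversal for part (2)) such that every rule of
  the ambient system either avoids \<open>c\<close> or has \<open>c\<close> exactly once on each side,
  as the first symbol, and every rule of \<open>R\<close> is of the latter kind. Then the
  number \<open>N\<close> of markers is invariant, and for each \<open>m \<le> N\<close> the suffix starting
  at the \<open>m\<close>-th marker from the right is itself rewritten by the ambient system
  (or left unchanged) along any reduction. An \<open>R\<close>-step is a top step on one of
  these \<open>N\<close> suffixes, so by pigeonhole an infinite relative \<open>R\<close>-reduction
  projects, for some fixed \<open>m\<close>, to an infinite relative top reduction once the
  stuttering steps are removed.\<close>

lemma eq_if_stutter: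
  assumes "a \<le> b" and "\<And>k. a \<le> k \<Longrightarrow> k < b \<Longrightarrow> s k = s (Suc k)"
  shows "s a = s b"
  using assms by (induction b rule: dec_induct) auto

lemma rel_terminating_reflcl:
  assumes "rel_terminating R1 R2"
  shows "rel_terminating R1 (R2\<^sup>=)"
  unfolding rel_terminating_def
proof
  assume "\<exists>s I. infinite I \<and> (\<forall>i\<in>I. (s i, s (Suc i)) \<in> R1)
                  \<and> (\<forall>i. i \<notin> I \<longrightarrow> (s i, s (Suc i)) \<in> R2\<^sup>=)"
  then obtain s I where I: "infinite I" and in_I: "\<forall>i\<in>I. (s i, s (Suc i)) \<in> R1"
    and off_I: "\<forall>i. i \<notin> I \<longrightarrow> (s i, s (Suc i)) \<in> R2\<^sup>="
    by blast
  \<comment> \<open>Keep the positions in \<open>I\<close> and the non-stuttering ones; in between, \<open>s\<close> is constant.\<close>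
  define J where "J = I \<union> {i. s i \<noteq> s (Suc i)}"
  have J: "infinite J" using I unfolding J_def by simp
  define e where "e = enumerate J"
  have stutter: "s (Suc (e n)) = s (e (Suc n))" for n
  proof (rule eq_if_stutter)
    show "Suc (e n) \<le> e (Suc n)" unfolding e_def using enumerate_step[OF J] by (rule Suc_leI)
  next
    fix k assume "Suc (e n) \<le> k" "k < e (Suc n)"
    have "k \<notin> J"
    proof
      assume "k \<in> J"
      with \<open>Suc (e n) \<le> k\<close> have "e (Suc n) \<le> k"
        unfolding e_def enumerate_Suc''[OF J] by (intro Least_le) simp
      with \<open>k < e (Suc n)\<close> show False by simp
    qed
    then show "s k = s (Suc k)" unfolding J_def by blast
  qed
  define t where "t n = s (e n)" for n
  define I' where "I' = {n. e n \<in> I}"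
  have "I \<subseteq> e ` I'"
  proof
    fix i assume "i \<in> I"
    then obtain n where "e n = i"
      using enumerate_Ex[OF J] unfolding e_def J_def by blast
    with \<open>i \<in> I\<close> show "i \<in> e ` I'" unfolding I'_def by blast
  qed
  then have "infinite I'" using I finite_surj by blast
  moreover have "(t n, t (Suc n)) \<in> R1" if "n \<in> I'" for n
    using that in_I stutter[of n] unfolding I'_def t_def by force
  moreover have "(t n, t (Suc n)) \<in> R2" if "n \<notin> I'" for n
  proof -
    have "e n \<in> J" unfolding e_def by (rule enumerate_in_set[OF J])
    with that have "s (e n) \<noteq> s (Suc (e n))" unfolding I'_def J_def by blast
    with that show ?thesis using off_I stutter[of n] unfolding I'_def t_def by force
  qed
  ultimately show False
    using assms unfolding rel_terminating_def by blast
qed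

lemma rstep_mono: "R \<subseteq> S \<Longrightarrow> rstep R \<subseteq> rstep S"
  unfolding rstep_def by blast

lemma rstep_single: "(u @ l @ v, u @ r @ v) \<in> rstep {(l, r)}"
  unfolding rstep_def by blast

lemma rev_srs_mono: "R \<subseteq> S \<Longrightarrow> rev_srs R \<subseteq> rev_srs S"
  unfolding rev_srs_def by blast

lemma rev_srs_simps:
  "rev_srs {} = {}"
  "rev_srs (insert (l, r) R) = insert (rev l, rev r) (rev_srs R)"
  "rev_srs (R \<union> S) = rev_srs R \<union> rev_srs S"
  unfolding rev_srs_def by auto

text \<open>\<open>marker_suffix c m w\<close> is the suffix of \<open>w\<close> starting at the \<open>m\<close>-th occurrence
  of \<open>c\<close> counted from the right, and \<open>w\<close> itself if there are fewer than \<open>m\<close>.\<close>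
fun marker_suffix :: "'a \<Rightarrow> nat \<Rightarrow> 'a list \<Rightarrow> 'a list" where
  "marker_suffix c m [] = []"
| "marker_suffix c m (x # xs) =
     (if m \<le> count_list xs c then marker_suffix c m xs else x # xs)"

lemma marker_suffix_less: "count_list w c < m \<Longrightarrow> marker_suffix c m w = w"
  by (cases w) (auto split: if_splits)

lemma marker_suffix_append_ge:
  "m \<le> count_list w c \<Longrightarrow> marker_suffix c m (u @ w) = marker_suffix c m w"
  by (induction u) auto

lemma marker_suffix_append_less:
  "count_list w c < m \<Longrightarrow>
     marker_suffix c m (u @ w) = marker_suffix c (m - count_list w c) u @ w"
  by (induction u) (auto simp: marker_suffix_less)

lemma marker_suffix_at_head:
  assumes "c \<notin> set w"
  shows "marker_suffix c (Suc (count_list v c)) (u @ c # w @ v) = c # w @ v"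
  using assms marker_suffix_append_ge[of _ "c # w @ v" c u] marker_suffix_less[of "w @ v" c]
  by simp

definition marker_free :: "'a \<Rightarrow> 'a list \<Rightarrow> 'a list \<Rightarrow> bool" where
  "marker_free c l r \<longleftrightarrow> c \<notin> set l \<and> c \<notin> set r"

definition marker_headed :: "'a \<Rightarrow> 'a list \<Rightarrow> 'a list \<Rightarrow> bool" where
  "marker_headed c l r \<longleftrightarrow>
     (\<exists>l' r'. l = c # l' \<and> r = c # r' \<and> c \<notin> set l' \<and> c \<notin> set r')"

lemma marker_suffix_rewrite:
  assumes "marker_free c l r \<or> marker_headed c l r"
  shows "(marker_suffix c m (u @ l @ v), marker_suffix c m (u @ r @ v)) \<in> (rstep {(l, r)})\<^sup>="
proof -
  have count: "count_list l c = count_list r c"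
    using assms by (auto simp: marker_free_def marker_headed_def)
  consider (right) "m \<le> count_list v c"
    | (rule) "count_list v c < m" "m \<le> count_list (l @ v) c"
    | (left) "count_list (l @ v) c < m"
    by linarith
  then show ?thesis
  proof cases
    case right
    then show ?thesis by (simp add: marker_suffix_append_ge[of _ v] flip: append_assoc)
  next
    case rule
    then obtain l' r' where "l = c # l'" "r = c # r'" "c \<notin> set l'" "c \<notin> set r'"
      and "m = Suc (count_list v c)"
      using assms by (auto simp: marker_free_def marker_headed_def)
    then show ?thesis using rstep_single[of "[]" l v r] by (simp add: marker_suffix_at_head)
  next
    case left
    then show ?thesis
      using count rstep_single
      by (simp add: marker_suffix_append_less[of "l @ v"] marker_suffix_append_less[of "r @ v"])
  qed
qed

lemma rstep_count_list:
  assumes "(s, t) \<in> rstep S" "\<forall>(l, r)\<in>S. marker_free c l r \<or> marker_headed c l r"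
  shows "count_list t c = count_list s c"
  using assms unfolding rstep_def by (fastforce simp: marker_free_def marker_headed_def)

lemma rstep_marker_suffix:
  assumes "(s, t) \<in> rstep S" "\<forall>(l, r)\<in>S. marker_free c l r \<or> marker_headed c l r"
  shows "(marker_suffix c m s, marker_suffix c m t) \<in> (rstep S)\<^sup>="
proof -
  obtain u l r v where s: "s = u @ l @ v" and t: "t = u @ r @ v" and lr: "(l, r) \<in> S"
    using assms(1) unfolding rstep_def by blast
  have "rstep {(l, r)} \<subseteq> rstep S" using lr by (intro rstep_mono) simp
  then show ?thesis
    using marker_suffix_rewrite[of c l r m u v] assms(2) lr unfolding s t by auto
qed

lemma rstep_marker_headed_topstep:
  assumes "(s, t) \<in> rstep R" "\<forall>(l, r)\<in>R. marker_headed c l r"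
  shows "\<exists>m\<in>{1..count_list s c}. (marker_suffix c m s, marker_suffix c m t) \<in> topstep R"
proof -
  obtain u l r v where s: "s = u @ l @ v" and t: "t = u @ r @ v" and lr: "(l, r) \<in> R"
    using assms(1) unfolding rstep_def by blast
  obtain l' r' where l: "l = c # l'" "c \<notin> set l'" and r: "r = c # r'" "c \<notin> set r'"
    using assms(2) lr by (auto simp: marker_headed_def)
  have "(l @ v, r @ v) \<in> topstep R" using lr unfolding topstep_def by blast
  then show ?thesis
    by (intro bexI[of _ "Suc (count_list v c)"]) (simp_all add: s t l r marker_suffix_at_head)
qed

lemma rel_terminating_rstep_if_topstep:
  assumes S: "\<forall>(l, r)\<in>S. marker_free c l r \<or> marker_headed c l r"
    and R: "\<forall>(l, r)\<in>R. marker_headed c l r" and "R \<subseteq> S"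
    and top: "rel_terminating (topstep R) (rstep S)"
  shows "rel_terminating (rstep R) (rstep S)"
  unfolding rel_terminating_def
proof
  assume "\<exists>s I. infinite I \<and> (\<forall>i\<in>I. (s i, s (Suc i)) \<in> rstep R)
                  \<and> (\<forall>i. i \<notin> I \<longrightarrow> (s i, s (Suc i)) \<in> rstep S)"
  then obtain s I where I: "infinite I" and in_I: "\<forall>i\<in>I. (s i, s (Suc i)) \<in> rstep R"
    and off_I: "\<forall>i. i \<notin> I \<longrightarrow> (s i, s (Suc i)) \<in> rstep S"
    by blast
  have step: "(s i, s (Suc i)) \<in> rstep S" for i
    using in_I off_I rstep_mono[OF \<open>R \<subseteq> S\<close>] by blast
  define N where "N = count_list (s 0) c"
  have count: "count_list (s i) c = N" for i
    by (induction i) (use rstep_count_list[OF step S] N_def in auto)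
  have "\<forall>i\<in>I. \<exists>m\<in>{1..N}. (marker_suffix c m (s i), marker_suffix c m (s (Suc i))) \<in> topstep R"
  proof
    fix i assume "i \<in> I"
    from rstep_marker_headed_topstep[OF in_I[rule_format, OF this] R]
    show "\<exists>m\<in>{1..N}. (marker_suffix c m (s i), marker_suffix c m (s (Suc i))) \<in> topstep R"
      unfolding count .
  qed
  from pigeonhole_infinite_rel[OF I finite_atLeastAtMost this]
  obtain m where Im: "infinite {i\<in>I. (marker_suffix c m (s i), marker_suffix c m (s (Suc i))) \<in> topstep R}"
    by blast
  define t where "t i = marker_suffix c m (s i)" for i
  have "infinite {i\<in>I. (t i, t (Suc i)) \<in> topstep R}"
    using Im unfolding t_def .
  moreover have "(t i, t (Suc i)) \<in> (rstep S)\<^sup>=" for i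
    unfolding t_def by (rule rstep_marker_suffix[OF step S])
  ultimately have "\<not> rel_terminating (topstep R) ((rstep S)\<^sup>=)"
    unfolding rel_terminating_def by blast
  with rel_terminating_reflcl[OF top] show False by blast
qed

theorem mainTheorem7:
  shows "(\<forall>R. R \<subseteq> B_rules \<longrightarrow>
            rel_terminating (topstep R) (rstep T_rules) \<longrightarrow>
            rel_terminating (rstep R) (rstep T_rules))
       \<and> (\<forall>Q. Q \<subseteq> D_T \<longrightarrow>
            rel_terminating (topstep (rev_srs Q)) (rstep (rev_srs T_rules)) \<longrightarrow>
            rel_terminating (rstep (rev_srs Q)) (rstep (rev_srs T_rules)))"
proof (intro conjI allI impI)
  fix R assume "R \<subseteq> B_rules" "rel_terminating (topstep R) (rstep T_rules)"
  moreover have "\<forall>(l, r)\<in>T_rules. marker_free Lhd l r \<or> marker_headed Lhd l r"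
    unfolding T_rules_def D_T_def A_rules_def B_rules_def marker_free_def marker_headed_def
    by auto
  moreover have "\<forall>(l, r)\<in>B_rules. marker_headed Lhd l r"
    unfolding B_rules_def marker_headed_def by auto
  ultimately show "rel_terminating (rstep R) (rstep T_rules)"
    by (intro rel_terminating_rstep_if_topstep[where c = Lhd]) (auto simp: T_rules_def)
next
  fix Q assume "Q \<subseteq> D_T" and top: "rel_terminating (topstep (rev_srs Q)) (rstep (rev_srs T_rules))"
  have "\<forall>(l, r)\<in>rev_srs T_rules. marker_free Rhd l r \<or> marker_headed Rhd l r"
    unfolding T_rules_def D_T_def A_rules_def B_rules_def rev_srs_simps
      marker_free_def marker_headed_def
    by auto
  moreover have "\<forall>(l, r)\<in>rev_srs D_T. marker_headed Rhd l r"
    unfolding D_T_def rev_srs_simps marker_headed_def by auto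
  moreover have "rev_srs Q \<subseteq> rev_srs D_T"
    using \<open>Q \<subseteq> D_T\<close> by (rule rev_srs_mono)
  moreover have "rev_srs D_T \<subseteq> rev_srs T_rules"
    by (rule rev_srs_mono) (auto simp: T_rules_def)
  ultimately show "rel_terminating (rstep (rev_srs Q)) (rstep (rev_srs T_rules))"
    by (intro rel_terminating_rstep_if_topstep[where c = Rhd, OF _ _ _ top]) blast+
qed

end
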